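(* Let $(Q,\rightarrow)$ be a finite transition system. Let $\mathscr{U}$ be a preorder on $Q$ and $\mathscr{R}\subseteq\mathscr{U}$ a preorder with $\mathscr{R}\circ\rightarrow^{-1}\subseteq\rightarrow^{-1}\circ\mathscr{U}$. Let $\mathscr{P}$ be the coarsest equivalence relation with $\mathscr{P}\subseteq\mathscr{R}$ and $\mathscr{P}\circ\rightarrow^{-1}\subseteq\rightarrow^{-1}\circ\mathscr{R}$. Let $\mathit{NotRel}=\mathscr{U}\setminus\mathscr{R}$ and $\mathscr{V}=\mathscr{R}\setminus\mathit{NotRel}'$ where $$\mathit{NotRel}'=\bigcup\{[c]_{\mathscr{P}}\times[d]_{\mathscr{P}} \mid b,c,d\in Q,\ c\rightarrow b,\ c\,\mathscr{R}\,d,\ d\in\rightarrow^{-1}(\mathit{NotRel}(b)),\ d\notin\rightarrow^{-1}(\mathscr{R}(b))\}.$$ Then: 1. $\mathit{NotRel}'=X$ where $X=\{(c,d)\mid \exists b\in Q:\ c\rightarrow_{\mathscr{R}}b,\ c\,\mathscr{R}\,d,\ d\in\rightarrow_{\mathscr{R}}^{-1}(\mathit{NotRel}(b)),\ d\notin\rightarrow_{\mathscr{R}}^{-1}(\mathscr{R}(b))\}$; 2. every simulation $\mathscr{S}\subseteq\mathscr{R}$ satisfies $\mathscr{S}\subseteq\mathscr{V}$; 3. $\mathscr{V}\circ\rightarrow^{-1}\subseteq\rightarrow^{-1}\circ\mathscr{R}$; 4. $\mathscr{V}$ is a preorder; 5. $\mathscr{V}$ is $\mathscr{R}$-stable, i.e.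 $\mathscr{V}\subseteq\mathscr{R}$ is a preorder with $\mathscr{V}\circ\rightarrow^{-1}\subseteq\rightarrow^{-1}\circ\mathscr{R}$; 6. the blocks of $\mathscr{V}$ are exactly the blocks of $\mathscr{P}$ (i.e. $\{[q]_{\mathscr{V}}\mid q\in Q\}=\{[q]_{\mathscr{P}}\mid q\in Q\}$).
   Context: For relations on $Q$: $\mathscr{R}(q)=\{q'\mid q\,\mathscr{R}\,q'\}$, $\mathscr{R}(Y)=\bigcup_{q\in Y}\mathscr{R}(q)$, $\mathscr{R}^{-1}=\{(y,x)\mid(x,y)\in\mathscr{R}\}$, $\mathscr{S}\circ\mathscr{R}=\{(x,y)\mid y\in\mathscr{S}(\mathscr{R}(x))\}$. A preorder is a reflexive transitive relation; $[q]_{\mathscr{R}}=\{q'\mid q\,\mathscr{R}\,q'\wedge q'\,\mathscr{R}\,q\}$. A relation $\mathscr{S}$ is a simulation if $\mathscr{S}\circ\rightarrow^{-1}\subseteq\rightarrow^{-1}\circ\mathscr{S}$ (equivalently: $q_1\,\mathscr{S}\,q_2$ and $q_1\rightarrow q_1'$ imply some $q_2'$ with $q_2\rightarrow q_2'$ and $q_1'\,\mathscr{S}\,q_2'$). A transition $q\rightarrow q'$ is $\mathscr{R}$-maximal, written $q\rightarrow_{\mathscr{R}}q'$, if for all $q''$, ($q\rightarrow q''$ and $q'\,\mathscr{R}\,q''$) implies $q''\in[q']_{\mathscr{R}}$. The coarsest equivalence relation $\mathscr{P}$ in the hypothesis exists (it contains all other equivalence relations with the same two properties). *)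

theory Defs
  imports Main
begin

text \<open>Relations on Q are sets of pairs. The paper's composition S \<circ> R (first R, then S)
  is Isabelle's relcomp R O S. The transition relation is T (q \<rightarrow> q' iff (q,q') \<in> T).\<close>

definition preorder_on :: "'a set \<Rightarrow> ('a \<times> 'a) set \<Rightarrow> bool" where
  "preorder_on Q R \<longleftrightarrow> R \<subseteq> Q \<times> Q \<and> (\<forall>q\<in>Q. (q, q) \<in> R) \<and> trans R"

definition rel_class :: "('a \<times> 'a) set \<Rightarrow> 'a \<Rightarrow> 'a set" where
  "rel_class R q = {q'. (q, q') \<in> R \<and> (q', q) \<in> R}"

definition is_simulation :: "('a \<times> 'a) set \<Rightarrow> ('a \<times> 'a) set \<Rightarrow> bool" where
  "is_simulation T S \<longleftrightarrow> converse T O S \<subseteq> S O converse T"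

definition maximal_trans :: "('a \<times> 'a) set \<Rightarrow> ('a \<times> 'a) set \<Rightarrow> ('a \<times> 'a) set" where
  "maximal_trans T R = {(q, q'). (q, q') \<in> T \<and>
      (\<forall>q''. (q, q'') \<in> T \<and> (q', q'') \<in> R \<longrightarrow> q'' \<in> rel_class R q')}"

end

theory Submission
  imports Defs
begin

text \<open>A pair (c, d) of R fails to be matched exactly when some move c \<rightarrow> b cannot be answered by
  a move d \<rightarrow> e with b R e. NotRel' collects precisely these failures: the extra conditions
  in its definition are automatic by R-stability, and taking whole P-blocks adds nothing new
  because P is stable. So V is the relation of matched pairs of R, which is a preorder, stable
  with respect to R and contains every simulation inside R, in particular P. Its symmetric
  part is then an equivalence with the properties defining P, hence equals P by coarsestness.
  On a finite system every move c \<rightarrow> b is R-dominated by an R-maximal move c \<rightarrow> b', which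
  gives the description X via maximal transitions.\<close>

definition sim_refine :: "('a \<times> 'a) set \<Rightarrow> ('a \<times> 'a) set \<Rightarrow> ('a \<times> 'a) set" where
  "sim_refine T R = {(c, d) \<in> R. \<forall>b. (c, b) \<in> T \<longrightarrow> (\<exists>e. (d, e) \<in> T \<and> (b, e) \<in> R)}"

lemma preorder_on_subset: "preorder_on Q R \<Longrightarrow> R \<subseteq> Q \<times> Q"
  unfolding preorder_on_def by blast

lemma preorder_on_refl: "preorder_on Q R \<Longrightarrow> q \<in> Q \<Longrightarrow> (q, q) \<in> R"
  unfolding preorder_on_def by blast

lemma preorder_on_trans: "preorder_on Q R \<Longrightarrow> (x, y) \<in> R \<Longrightarrow> (y, z) \<in> R \<Longrightarrow> (x, z) \<in> R"
  unfolding preorder_on_def by (blast dest: transD)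

lemma maximal_trans_subset: "maximal_trans T R \<subseteq> T"
  unfolding maximal_trans_def by auto

lemma exists_maximal_trans_above:
  assumes "finite Q" and "T \<subseteq> Q \<times> Q" and "preorder_on Q R" and "(c, b) \<in> T"
  shows "\<exists>b'. (c, b') \<in> maximal_trans T R \<and> (b, b') \<in> R"
proof -
  note refl = preorder_on_refl[OF assms(3)] and R_trans = preorder_on_trans[OF assms(3)]
  define S where "S = {x. (c, x) \<in> T \<and> (b, x) \<in> R}"
  define above where "above x = {y \<in> S. (x, y) \<in> R}" for x
  have "S \<subseteq> Q" using assms(2) unfolding S_def by auto
  have fin_above: "finite (above x)" for x
    by (rule finite_subset[OF _ assms(1)]) (use \<open>S \<subseteq> Q\<close> in \<open>auto simp: above_def\<close>)
  have "b \<in> S" using assms(2,4) refl unfolding S_def by auto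
  \<comment> \<open>an element of S with the fewest R-successors in S is R-maximal among the c-moves\<close>
  then obtain x where x: "x \<in> S" and least: "\<And>y. y \<in> S \<Longrightarrow> card (above x) \<le> card (above y)"
    using ex_has_least_nat[of "\<lambda>x. x \<in> S" b "\<lambda>x. card (above x)"] by blast
  have "(q, x) \<in> R" if q: "(c, q) \<in> T" "(x, q) \<in> R" for q
  proof (rule ccontr)
    assume qx: "(q, x) \<notin> R"
    have "q \<in> S" using x q R_trans unfolding S_def by blast
    have "x \<in> above x" using x \<open>S \<subseteq> Q\<close> refl unfolding above_def by auto
    then have "above q \<subset> above x"
      using q(2) qx R_trans unfolding above_def by blast
    then have "card (above q) < card (above x)" by (simp add: fin_above psubset_card_mono)
    with least[OF \<open>q \<in> S\<close>] show False by simp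
  qed
  then have "(c, x) \<in> maximal_trans T R"
    using x unfolding maximal_trans_def rel_class_def S_def by auto
  with x show ?thesis unfolding S_def by blast
qed

lemma ex_answer_iff_ex_maximal_answer:
  assumes "finite Q" and "T \<subseteq> Q \<times> Q" and "preorder_on Q R"
  shows "(\<exists>e. (d, e) \<in> T \<and> (b, e) \<in> R) \<longleftrightarrow> (\<exists>e. (d, e) \<in> maximal_trans T R \<and> (b, e) \<in> R)"
proof
  assume "\<exists>e. (d, e) \<in> T \<and> (b, e) \<in> R"
  then obtain e e' where "(b, e) \<in> R" "(d, e') \<in> maximal_trans T R" "(e, e') \<in> R"
    using exists_maximal_trans_above[OF assms] by blast
  then show "\<exists>e. (d, e) \<in> maximal_trans T R \<and> (b, e) \<in> R"
    using preorder_on_trans[OF assms(3)] by blast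
qed (use maximal_trans_subset in blast)

lemma unmatched_eq_R_minus_sim_refine:
  assumes TQ: "T \<subseteq> Q \<times> Q" and R_pre: "preorder_on Q R"
    and R_stab: "converse T O R \<subseteq> U O converse T"
    and P_refl: "\<And>q. q \<in> Q \<Longrightarrow> (q, q) \<in> P" and PR: "P \<subseteq> R"
    and P_stab: "converse T O P \<subseteq> R O converse T"
  shows "\<Union>{rel_class P c \<times> rel_class P d | b c d.
             b \<in> Q \<and> c \<in> Q \<and> d \<in> Q \<and> (c, b) \<in> T \<and> (c, d) \<in> R \<and>
             d \<in> converse T `` ((U - R) `` {b}) \<and> d \<notin> converse T `` (R `` {b})}
         = R - sim_refine T R" (is "?N = _")
proof (intro equalityI subsetI)
  note R_trans = preorder_on_trans[OF R_pre]
  fix p assume "p \<in> ?N"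
  then obtain b c d c0 d0 where p: "p = (c, d)" and blocks: "c \<in> rel_class P c0" "d \<in> rel_class P d0"
    and c0b: "(c0, b) \<in> T" and "(c0, d0) \<in> R" and unmatched: "d0 \<notin> converse T `` (R `` {b})"
    by blast
  have "(c0, c) \<in> P" "(c, c0) \<in> P" "(d0, d) \<in> P" "(d, d0) \<in> P"
    using blocks unfolding rel_class_def by auto
  with \<open>(c0, d0) \<in> R\<close> have "(c, d) \<in> R" using PR R_trans by blast
  obtain b' where "(c, b') \<in> T" "(b, b') \<in> R"
    using P_stab \<open>(c0, c) \<in> P\<close> c0b by blast
  moreover have "(b', e) \<notin> R" if "(d, e) \<in> T" for e
  proof
    assume "(b', e) \<in> R"
    obtain e' where "(d0, e') \<in> T" "(e, e') \<in> R"
      using P_stab \<open>(d, d0) \<in> P\<close> \<open>(d, e) \<in> T\<close> by blast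
    with \<open>(b, b') \<in> R\<close> \<open>(b', e) \<in> R\<close> R_trans unmatched show False by blast
  qed
  ultimately show "p \<in> R - sim_refine T R"
    using p \<open>(c, d) \<in> R\<close> unfolding sim_refine_def by blast
next
  fix p assume "p \<in> R - sim_refine T R"
  then obtain c d b where p: "p = (c, d)" and cd: "(c, d) \<in> R" and cb: "(c, b) \<in> T"
    and unmatched: "\<And>e. (d, e) \<in> T \<Longrightarrow> (b, e) \<notin> R"
    unfolding sim_refine_def by blast
  obtain g where "(d, g) \<in> T" "(b, g) \<in> U" using R_stab cd cb by blast
  with unmatched have "d \<in> converse T `` ((U - R) `` {b})" by blast
  moreover have "b \<in> Q" "c \<in> Q" "d \<in> Q" using cb cd TQ preorder_on_subset[OF R_pre] by auto
  moreover have "p \<in> rel_class P c \<times> rel_class P d"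
    using p P_refl \<open>c \<in> Q\<close> \<open>d \<in> Q\<close> unfolding rel_class_def by auto
  ultimately show "p \<in> ?N" using cb cd unmatched by blast
qed

lemma maximal_unmatched_eq_R_minus_sim_refine:
  assumes finQ: "finite Q" and TQ: "T \<subseteq> Q \<times> Q" and U_pre: "preorder_on Q U"
    and R_pre: "preorder_on Q R" and RU: "R \<subseteq> U"
    and R_stab: "converse T O R \<subseteq> U O converse T"
  shows "{(c, d). \<exists>b\<in>Q. (c, b) \<in> maximal_trans T R \<and> (c, d) \<in> R \<and>
             d \<in> converse (maximal_trans T R) `` ((U - R) `` {b}) \<and>
             d \<notin> converse (maximal_trans T R) `` (R `` {b})}
         = R - sim_refine T R" (is "?X = _")
proof (intro equalityI subsetI)
  note answer_iff = ex_answer_iff_ex_maximal_answer[OF finQ TQ R_pre]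
  fix p assume "p \<in> ?X"
  then obtain c d b where "p = (c, d)" "(c, b) \<in> T" "(c, d) \<in> R"
    and "\<not> (\<exists>e. (d, e) \<in> maximal_trans T R \<and> (b, e) \<in> R)"
    using maximal_trans_subset by blast
  then show "p \<in> R - sim_refine T R" unfolding sim_refine_def answer_iff by blast
next
  note R_trans = preorder_on_trans[OF R_pre] and U_trans = preorder_on_trans[OF U_pre]
  fix p assume "p \<in> R - sim_refine T R"
  then obtain c d b where p: "p = (c, d)" and cd: "(c, d) \<in> R" and cb: "(c, b) \<in> T"
    and unmatched: "\<And>e. (d, e) \<in> T \<Longrightarrow> (b, e) \<notin> R"
    unfolding sim_refine_def by blast
  obtain b' where cb': "(c, b') \<in> maximal_trans T R" and "(b, b') \<in> R"
    using exists_maximal_trans_above[OF finQ TQ R_pre cb] by blast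
  then have unmatched': "(b', e) \<notin> R" if "(d, e) \<in> T" for e
    using unmatched[OF that] R_trans by blast
  obtain g where "(d, g) \<in> T" "(b', g) \<in> U"
    using R_stab cd cb' maximal_trans_subset by blast
  moreover obtain g' where dg': "(d, g') \<in> maximal_trans T R" and "(g, g') \<in> R"
    using exists_maximal_trans_above[OF finQ TQ R_pre \<open>(d, g) \<in> T\<close>] by blast
  ultimately have "(b', g') \<in> U - R"
    using RU U_trans unmatched' maximal_trans_subset by blast
  with dg' have "d \<in> converse (maximal_trans T R) `` ((U - R) `` {b'})" by blast
  moreover have "b' \<in> Q" using cb' maximal_trans_subset TQ by blast
  ultimately show "p \<in> ?X"
    using p cb' cd unmatched' maximal_trans_subset by blast
qed

lemma sim_refine_subset: "sim_refine T R \<subseteq> R"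
  unfolding sim_refine_def by auto

lemma sim_refine_stable: "converse T O sim_refine T R \<subseteq> R O converse T"
  unfolding sim_refine_def by blast

lemma subset_sim_refine_if_stable:
  assumes "S \<subseteq> R" and "converse T O S \<subseteq> R O converse T"
  shows "S \<subseteq> sim_refine T R"
  using assms unfolding sim_refine_def by blast

lemma simulation_subset_sim_refine:
  assumes "S \<subseteq> R" and "is_simulation T S"
  shows "S \<subseteq> sim_refine T R"
proof (rule subset_sim_refine_if_stable[OF assms(1)])
  show "converse T O S \<subseteq> R O converse T"
    using assms(2) relcomp_mono[OF assms(1) order_refl, of "converse T"]
    unfolding is_simulation_def by (rule subset_trans)
qed

lemma preorder_on_sim_refine:
  assumes "T \<subseteq> Q \<times> Q" and R_pre: "preorder_on Q R"
  shows "preorder_on Q (sim_refine T R)"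
  unfolding preorder_on_def
proof (intro conjI ballI transI)
  show "sim_refine T R \<subseteq> Q \<times> Q"
    using sim_refine_subset preorder_on_subset[OF R_pre] by blast
  show "(q, q) \<in> sim_refine T R" if "q \<in> Q" for q
    using that assms(1) preorder_on_refl[OF R_pre] unfolding sim_refine_def by blast
  show "(x, z) \<in> sim_refine T R" if "(x, y) \<in> sim_refine T R" "(y, z) \<in> sim_refine T R" for x y z
    using that preorder_on_trans[OF R_pre] unfolding sim_refine_def by blast
qed

lemma coarsest_equiv_eq_sym_part:
  assumes V_pre: "preorder_on Q V" and "P \<subseteq> V" and "V \<subseteq> R"
    and V_stab: "converse T O V \<subseteq> R O converse T" and "equiv Q P"
    and P_coarsest: "\<And>P'. equiv Q P' \<Longrightarrow> P' \<subseteq> R \<Longrightarrow>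
                       converse T O P' \<subseteq> R O converse T \<Longrightarrow> P' \<subseteq> P"
  shows "V \<inter> converse V = P"
proof
  have "equiv Q (V \<inter> converse V)"
    unfolding equiv_def refl_on_def sym_def trans_def
    using preorder_on_subset[OF V_pre] preorder_on_refl[OF V_pre] preorder_on_trans[OF V_pre]
    by blast
  moreover have "converse T O (V \<inter> converse V) \<subseteq> R O converse T" using V_stab by blast
  ultimately show "V \<inter> converse V \<subseteq> P" using P_coarsest \<open>V \<subseteq> R\<close> by blast
  show "P \<subseteq> V \<inter> converse V"
    using \<open>P \<subseteq> V\<close> \<open>equiv Q P\<close> unfolding equiv_def sym_def by blast
qed

lemma rel_class_eq_if_sym_part_eq:
  assumes "V \<inter> converse V = P"
  shows "rel_class V q = rel_class P q"
  using assms unfolding rel_class_def by blast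

theorem theorem1:
  fixes Q :: "'a set" and T U R P :: "('a \<times> 'a) set"
  assumes finQ: "finite Q"
    and TQ: "T \<subseteq> Q \<times> Q"
    and U_pre: "preorder_on Q U"
    and R_pre: "preorder_on Q R"
    and RU: "R \<subseteq> U"
    and R_stab: "converse T O R \<subseteq> U O converse T"
    and P_equiv: "equiv Q P"
    and PR: "P \<subseteq> R"
    and P_stab: "converse T O P \<subseteq> R O converse T"
    and P_coarsest: "\<And>P'. equiv Q P' \<Longrightarrow> P' \<subseteq> R \<Longrightarrow>
                       converse T O P' \<subseteq> R O converse T \<Longrightarrow> P' \<subseteq> P"
  defines "NotRel \<equiv> U - R"
  defines "NotRel' \<equiv> \<Union>{rel_class P c \<times> rel_class P d | b c d.
             b \<in> Q \<and> c \<in> Q \<and> d \<in> Q \<and> (c, b) \<in> T \<and> (c, d) \<in> R \<and>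
             d \<in> converse T `` (NotRel `` {b}) \<and> d \<notin> converse T `` (R `` {b})}"
  defines "V \<equiv> R - NotRel'"
  defines "X \<equiv> {(c, d). \<exists>b\<in>Q. (c, b) \<in> maximal_trans T R \<and> (c, d) \<in> R \<and>
             d \<in> converse (maximal_trans T R) `` (NotRel `` {b}) \<and>
             d \<notin> converse (maximal_trans T R) `` (R `` {b})}"
  shows "NotRel' = X \<and>
         (\<forall>S. S \<subseteq> R \<and> is_simulation T S \<longrightarrow> S \<subseteq> V) \<and>
         converse T O V \<subseteq> R O converse T \<and>
         preorder_on Q V \<and>
         (V \<subseteq> R \<and> preorder_on Q V \<and> converse T O V \<subseteq> R O converse T) \<and>
         {rel_class V q | q. q \<in> Q} = {rel_class P q | q. q \<in> Q}"
proof -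
  have P_refl: "\<And>q. q \<in> Q \<Longrightarrow> (q, q) \<in> P"
    using P_equiv unfolding equiv_def refl_on_def by blast
  have NotRel': "NotRel' = R - sim_refine T R"
    unfolding NotRel'_def NotRel_def
    using unmatched_eq_R_minus_sim_refine[OF TQ R_pre R_stab P_refl PR P_stab] .
  have X: "X = R - sim_refine T R"
    unfolding X_def NotRel_def
    using maximal_unmatched_eq_R_minus_sim_refine[OF finQ TQ U_pre R_pre RU R_stab] .
  have V: "V = sim_refine T R"
    unfolding V_def NotRel' using sim_refine_subset by blast
  have V_pre: "preorder_on Q V" unfolding V using preorder_on_sim_refine[OF TQ R_pre] .
  have VR: "V \<subseteq> R" and V_stab: "converse T O V \<subseteq> R O converse T"
    unfolding V by (rule sim_refine_subset, rule sim_refine_stable)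
  have "P \<subseteq> V" unfolding V using PR P_stab by (rule subset_sim_refine_if_stable)
  then have "V \<inter> converse V = P"
    using coarsest_equiv_eq_sym_part[OF V_pre _ VR V_stab P_equiv P_coarsest] by blast
  then have "rel_class V q = rel_class P q" for q by (rule rel_class_eq_if_sym_part_eq)
  moreover have "S \<subseteq> V" if "S \<subseteq> R" "is_simulation T S" for S
    unfolding V using that by (rule simulation_subset_sim_refine)
  ultimately show ?thesis
    unfolding NotRel' X using V_pre VR V_stab by simp
qed

end
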